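(* Let $\mathbb{T}^3=\mathbb{R}^3/\mathbb{Z}^3$ and consider smooth time-dependent fields $\mathbf{u}_1(\mathbf{x}_1,t)$, $\mathbf{u}_2(\mathbf{x}_1,\mathbf{x}_2,t)$ on $\mathbf{x}_1,\mathbf{x}_2\in\mathbb{T}^3$ (periodic boundary conditions in both variables) with $\nabla_1\cdot\mathbf{u}_1=0$ and $\nabla_2\cdot\mathbf{u}_2=0$. Let $\ell(\mathbf{u}_1,\mathbf{u}_2)$ be a Lagrangian with momenta $\mathbf{m}_1=\delta\ell/\delta\mathbf{u}_1$ and $\mathbf{m}_2=\delta\ell/\delta\mathbf{u}_2$, and suppose that, for some pressures $\mathsf{p}_1(\mathbf{x}_1,t)$, $\mathsf{p}_2(\mathbf{x}_1,\mathbf{x}_2,t)$, the fields satisfy \[ \frac{\partial\mathbf{m}_1}{\partial t}+\mathbf{u}_1\cdot\nabla_1\mathbf{m}_1+(\nabla_1\mathbf{u}_1)^{T}\cdot\mathbf{m}_1+\int(\nabla_1\mathbf{u}_2)^{T}\cdot\mathbf{m}_2\,{\rm d}^3x_2=-\nabla_1\mathsf{p}_1, \] \[ \frac{\partial\mathbf{m}_2}{\partial t}+\mathbf{u}_1\cdot\nabla_1\mathbf{m}_2-\mathbf{u}_2\times(\nabla_2\times\mathbf{m}_2)=-\nabla_2\mathsf{p}_2 . \] Define the fluctuation helicity density \[ \mathcal{H}(\mathbf{x}_1,t)=\int\mathbf{m}_2\cdot(\nabla_2\times\mathbf{m}_2)\,{\rm d}^3x_2 . \] Then the total fluctuation helicity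 is preserved: $\dfrac{d}{dt}\displaystyle\int\mathcal{H}\,{\rm d}^3x_1=0$.
   Context: Two-scale periodic setting: $\mathbf{x}_1$ is the resolved (mean-flow) variable and $\mathbf{x}_2$ the subgrid (fluctuation) variable, both in the unit periodic cube; integrals over $\mathbf{x}_1$ and $\mathbf{x}_2$ are over $\mathbb{T}^3$. $\nabla_1=\partial/\partial\mathbf{x}_1$, $\nabla_2=\partial/\partial\mathbf{x}_2$. For a vector $\mathbf{u}$ and covector $\mathbf{v}$, $(\nabla\mathbf{u})^T\cdot\mathbf{v}$ denotes the vector $v_j\nabla u^j$. *)

theory Defs
  imports "HOL-Analysis.Analysis"
begin

fun iter_dd :: "'a::euclidean_space list \<Rightarrow> ('a \<Rightarrow> 'b::real_normed_vector) \<Rightarrow> 'a \<Rightarrow> 'b" where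
  "iter_dd [] f = f"
| "iter_dd (v # vs) f = (\<lambda>x. frechet_derivative (iter_dd vs f) (at x) v)"

definition smooth_map :: "('a::euclidean_space \<Rightarrow> 'b::real_normed_vector) \<Rightarrow> bool" where
  "smooth_map f \<longleftrightarrow> (\<forall>vs. continuous_on UNIV (iter_dd vs f) \<and> (\<forall>x. iter_dd vs f differentiable (at x)))"

text \<open>Z^3-periodicity in a variable of R^3 (function on the torus T^3).\<close>
definition periodic3 :: "(real^3 \<Rightarrow> 'b) \<Rightarrow> bool" where
  "periodic3 g \<longleftrightarrow> (\<forall>x (i::3). g (x + axis i 1) = g x)"

definition torus_int :: "(real^3 \<Rightarrow> 'b::euclidean_space) \<Rightarrow> 'b" where
  "torus_int g = integral (cbox (0::real^3) 1) g"

definition pd :: "3 \<Rightarrow> (real^3 \<Rightarrow> 'b::real_normed_vector) \<Rightarrow> real^3 \<Rightarrow> 'b" where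
  "pd i g x = vector_derivative (\<lambda>s. g (x + s *\<^sub>R axis i 1)) (at 0)"

definition dt :: "(real \<Rightarrow> 'b::real_normed_vector) \<Rightarrow> real \<Rightarrow> 'b" where
  "dt g t = vector_derivative g (at t)"

definition grad :: "(real^3 \<Rightarrow> real) \<Rightarrow> real^3 \<Rightarrow> real^3" where
  "grad g x = (\<chi> i. pd i g x)"

definition divg :: "(real^3 \<Rightarrow> real^3) \<Rightarrow> real^3 \<Rightarrow> real" where
  "divg g x = (\<Sum>i\<in>UNIV. pd i (\<lambda>y. g y $ i) x)"

definition curl :: "(real^3 \<Rightarrow> real^3) \<Rightarrow> real^3 \<Rightarrow> real^3" where
  "curl g x = vector [pd 2 (\<lambda>y. g y $ 3) x - pd 3 (\<lambda>y. g y $ 2) x,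
                      pd 3 (\<lambda>y. g y $ 1) x - pd 1 (\<lambda>y. g y $ 3) x,
                      pd 1 (\<lambda>y. g y $ 2) x - pd 2 (\<lambda>y. g y $ 1) x]"

definition adv :: "real^3 \<Rightarrow> (real^3 \<Rightarrow> real^3) \<Rightarrow> real^3 \<Rightarrow> real^3" where
  "adv v g x = (\<Sum>i\<in>UNIV. (v $ i) *\<^sub>R pd i g x)"

text \<open>(nabla u)^T . m : the vector with i-th component m_j d_i u^j.\<close>
definition gradT :: "(real^3 \<Rightarrow> real^3) \<Rightarrow> real^3 \<Rightarrow> real^3 \<Rightarrow> real^3" where
  "gradT u m x = (\<chi> i. m \<bullet> pd i u x)"

end

theory Submission
  imports Defs
begin

text \<open>
  Write the helicity as the integral of the density m2 \<cdot> curl2 m2. Differentiating under the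
  integral sign and integrating by parts in x2, where curl2 is symmetric, its time derivative
  becomes 2 \<integral>\<integral> \<partial>t m2 \<cdot> curl2 m2. Insert the fluctuation equation: the Lamb term
  u2 \<times> curl2 m2 is orthogonal to curl2 m2; the pressure term integrates to zero in x2 because
  curl2 m2 is divergence free; and, by the same symmetry of curl2, the advection term is half the
  derivative of the helicity density along u1, which integrates to zero in x1 because u1 is
  divergence free.
\<close>

lemma iter_dd_append: "iter_dd vs (iter_dd ws f) = iter_dd (vs @ ws) f"
  by (induction vs) auto

lemma smooth_map_iter_dd: "smooth_map f \<Longrightarrow> smooth_map (iter_dd ws f)"
  by (simp add: smooth_map_def iter_dd_append)

lemma smooth_map_imp_continuous_on: "smooth_map f \<Longrightarrow> continuous_on UNIV f"
  unfolding smooth_map_def by (metis iter_dd.simps(1))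

lemma smooth_map_imp_differentiable: "smooth_map f \<Longrightarrow> f differentiable (at z)"
  unfolding smooth_map_def by (metis iter_dd.simps(1))

definition has_continuous_derivative ::
    "('a::real_normed_vector \<Rightarrow> 'b::real_normed_vector) \<Rightarrow> ('a \<Rightarrow> 'a \<Rightarrow> 'b) \<Rightarrow> bool" where
  "has_continuous_derivative f f' \<longleftrightarrow>
     (\<forall>z. (f has_derivative f' z) (at z)) \<and> (\<forall>w. continuous_on UNIV (\<lambda>z. f' z w))"

lemma smooth_map_has_continuous_derivative:
  assumes "smooth_map f"
  shows "has_continuous_derivative f (\<lambda>z w. iter_dd [w] f z)"
proof -
  have "(f has_derivative (\<lambda>w. iter_dd [w] f z)) (at z)" for z
    using smooth_map_imp_differentiable[OF assms] by (simp add: frechet_derivative_works)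
  moreover have "continuous_on UNIV (iter_dd [w] f)" for w
    using assms unfolding smooth_map_def by blast
  ultimately show ?thesis
    unfolding has_continuous_derivative_def by (simp del: iter_dd.simps)
qed

lemma has_continuous_derivativeD:
  "has_continuous_derivative f f' \<Longrightarrow> (f has_derivative f' z) (at z)"
  unfolding has_continuous_derivative_def by blast

lemma has_continuous_derivative_continuous_on:
  "has_continuous_derivative f f' \<Longrightarrow> continuous_on UNIV f"
  unfolding has_continuous_derivative_def
  by (meson continuous_at_imp_continuous_on has_derivative_continuous)

lemma has_continuous_derivative_continuous_on_deriv:
  "has_continuous_derivative f f' \<Longrightarrow> continuous_on UNIV (\<lambda>z. f' z w)"
  unfolding has_continuous_derivative_def by blast

lemma has_continuous_derivative_compose_affine:
  assumes "has_continuous_derivative f f'" "bounded_linear L"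
  shows "has_continuous_derivative (\<lambda>y. f (c + L y)) (\<lambda>y v. f' (c + L y) (L v))"
  unfolding has_continuous_derivative_def
proof safe
  fix z
  have "((\<lambda>y. c + L y) has_derivative L) (at z)"
    using assms(2) by (auto intro!: derivative_eq_intros bounded_linear_imp_has_derivative)
  from diff_chain_at[OF this has_continuous_derivativeD[OF assms(1)]]
  show "((\<lambda>y. f (c + L y)) has_derivative (\<lambda>v. f' (c + L z) (L v))) (at z)"
    by (simp add: o_def)
next
  fix w
  have "continuous_on UNIV (\<lambda>y. c + L y)"
    using assms(2) by (intro continuous_intros linear_continuous_on)
  then show "continuous_on UNIV (\<lambda>z. f' (c + L z) (L w))"
    by (rule continuous_on_compose2[OF has_continuous_derivative_continuous_on_deriv[OF assms(1)]]) auto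
qed

lemma has_derivative_along_line:
  assumes "(f has_derivative f') (at (y + s *\<^sub>R u))"
  shows "((\<lambda>s. f (y + s *\<^sub>R u)) has_vector_derivative f' u) (at s)"
proof -
  have "((\<lambda>s. y + s *\<^sub>R u) has_derivative (\<lambda>h. h *\<^sub>R u)) (at s)"
    by (auto intro!: derivative_eq_intros)
  from diff_chain_at[OF this assms]
  have "((\<lambda>s. f (y + s *\<^sub>R u)) has_derivative (\<lambda>h. f' (h *\<^sub>R u))) (at s)"
    by (simp add: o_def)
  moreover have "(\<lambda>h. f' (h *\<^sub>R u)) = (\<lambda>h. h *\<^sub>R f' u)"
    using has_derivative_linear[OF assms] by (simp add: linear_cmul)
  ultimately show ?thesis by (simp add: has_vector_derivative_def)
qed

lemma has_continuous_derivative_along_line: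
  "has_continuous_derivative f f' \<Longrightarrow>
     ((\<lambda>s. f (y + s *\<^sub>R u)) has_vector_derivative f' (y + s *\<^sub>R u) u) (at s)"
  by (rule has_derivative_along_line[OF has_continuous_derivativeD])

lemma has_continuous_derivative_diff:
  "has_continuous_derivative f f' \<Longrightarrow> has_continuous_derivative g g' \<Longrightarrow>
     has_continuous_derivative (\<lambda>x. f x - g x) (\<lambda>x w. f' x w - g' x w)"
  unfolding has_continuous_derivative_def by (auto intro!: derivative_eq_intros continuous_intros)

lemma has_continuous_derivative_scaleR:
  fixes f :: "'a::real_normed_vector \<Rightarrow> real"
  shows "has_continuous_derivative f f' \<Longrightarrow> has_continuous_derivative g g' \<Longrightarrow>
     has_continuous_derivative (\<lambda>x. f x *\<^sub>R g x) (\<lambda>x w. f' x w *\<^sub>R g x + f x *\<^sub>R g' x w)"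
  using has_continuous_derivative_continuous_on[of f f'] has_continuous_derivative_continuous_on[of g g']
  by (simp add: has_continuous_derivative_def) (auto intro!: derivative_eq_intros continuous_intros)

lemma has_continuous_derivative_inner:
  fixes f :: "'a::real_normed_vector \<Rightarrow> 'b::real_inner"
  shows "has_continuous_derivative f f' \<Longrightarrow> has_continuous_derivative g g' \<Longrightarrow>
     has_continuous_derivative (\<lambda>x. f x \<bullet> g x) (\<lambda>x w. f' x w \<bullet> g x + f x \<bullet> g' x w)"
  using has_continuous_derivative_continuous_on[of f f'] has_continuous_derivative_continuous_on[of g g']
  by (simp add: has_continuous_derivative_def) (auto intro!: derivative_eq_intros continuous_intros)

lemma has_continuous_derivative_vec_nth:
  "has_continuous_derivative f f' \<Longrightarrow> has_continuous_derivative (\<lambda>x. f x $ k) (\<lambda>x w. f' x w $ k)"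
  unfolding has_continuous_derivative_def
  by (auto intro!: bounded_linear.has_derivative[OF bounded_linear_vec_nth] continuous_intros)

lemma vector3_eq_sum_axis:
  "(vector [a, b, c] :: real^3) = a *\<^sub>R axis 1 1 + b *\<^sub>R axis 2 1 + c *\<^sub>R axis 3 1"
  by (simp add: vec_eq_iff axis_def forall_3)

lemma has_continuous_derivative_vector3:
  "has_continuous_derivative a a' \<Longrightarrow> has_continuous_derivative b b' \<Longrightarrow> has_continuous_derivative c c' \<Longrightarrow>
   has_continuous_derivative (\<lambda>x. vector [a x, b x, c x] :: real^3) (\<lambda>x w. vector [a' x w, b' x w, c' x w])"
  unfolding has_continuous_derivative_def vector3_eq_sum_axis
  by (auto intro!: derivative_eq_intros continuous_intros)

lemma integrable_on_cbox_continuous_on_UNIV: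
  fixes f :: "'a::euclidean_space \<Rightarrow> 'b::banach"
  shows "continuous_on UNIV f \<Longrightarrow> f integrable_on cbox a b"
  by (rule integrable_continuous, erule continuous_on_subset) simp

section \<open>Iterated derivatives: symmetry and periodicity\<close>

lemma integral_derivative_along_line:
  fixes f :: "'a::real_normed_vector \<Rightarrow> 'b::banach"
  assumes "has_continuous_derivative f f'" "c \<le> a"
  shows "integral {c..a} (\<lambda>\<tau>. f' (y + \<tau> *\<^sub>R v) v) = f (y + a *\<^sub>R v) - f (y + c *\<^sub>R v)"
proof -
  have "((\<lambda>\<tau>. f' (y + \<tau> *\<^sub>R v) v) has_integral f (y + a *\<^sub>R v) - f (y + c *\<^sub>R v)) {c..a}"
    by (rule fundamental_theorem_of_calculus[OF assms(2), of "\<lambda>s. f (y + s *\<^sub>R v)", simplified])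
       (rule has_vector_derivative_at_within[OF has_continuous_derivative_along_line[OF assms(1)]])
  then show ?thesis by (rule integral_unique)
qed

lemma integral_along_line_has_vector_derivative_shift:
  fixes g :: "'a::real_normed_vector \<Rightarrow> 'b::banach"
  assumes "has_continuous_derivative g g'"
  shows "((\<lambda>b. integral {c..a} (\<lambda>\<tau>. g (y + \<tau> *\<^sub>R v + b *\<^sub>R w))) has_vector_derivative
           integral {c..a} (\<lambda>\<tau>. g' (y + \<tau> *\<^sub>R v) w)) (at 0)"
proof -
  have "((\<lambda>b. integral (cbox c a) (\<lambda>\<tau>. g (y + \<tau> *\<^sub>R v + b *\<^sub>R w))) has_vector_derivative
      integral (cbox c a) (\<lambda>\<tau>. g' (y + \<tau> *\<^sub>R v + 0 *\<^sub>R w) w)) (at 0 within UNIV)"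
  proof (rule leibniz_rule_vector_derivative[where fx="\<lambda>b \<tau>. g' (y + \<tau> *\<^sub>R v + b *\<^sub>R w) w"])
    fix b \<tau> :: real
    show "((\<lambda>b. g (y + \<tau> *\<^sub>R v + b *\<^sub>R w)) has_vector_derivative
        g' (y + \<tau> *\<^sub>R v + b *\<^sub>R w) w) (at b within UNIV)"
      using has_continuous_derivative_along_line[OF assms, of "y + \<tau> *\<^sub>R v" w b] by (simp add: add.assoc)
  next
    fix b :: real
    have "continuous_on UNIV (\<lambda>\<tau>. g (y + \<tau> *\<^sub>R v + b *\<^sub>R w))"
      by (rule continuous_on_compose2[OF has_continuous_derivative_continuous_on[OF assms]])
         (auto intro!: continuous_intros)
    then show "(\<lambda>\<tau>. g (y + \<tau> *\<^sub>R v + b *\<^sub>R w)) integrable_on cbox c a"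
      by (rule integrable_on_cbox_continuous_on_UNIV)
  next
    show "continuous_on (UNIV \<times> cbox c a) (\<lambda>(b, \<tau>). g' (y + \<tau> *\<^sub>R v + b *\<^sub>R w) w)"
      unfolding split_beta
      by (rule continuous_on_compose2[OF has_continuous_derivative_continuous_on_deriv[OF assms]])
         (auto intro!: continuous_intros)
  qed auto
  then show ?thesis by simp
qed

text \<open>Differentiate, in direction w and under the integral sign, the fundamental theorem of calculus
  for f along direction v.\<close>
lemma iter_dd_diff_along_line:
  fixes f :: "'a::euclidean_space \<Rightarrow> 'b::banach"
  assumes f: "smooth_map f" and "c \<le> a"
  shows "iter_dd [w] f (x + a *\<^sub>R v) - iter_dd [w] f (x + c *\<^sub>R v) =
    integral {c..a} (\<lambda>\<tau>. iter_dd [w, v] f (x + \<tau> *\<^sub>R v))"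
proof (rule vector_derivative_unique_at)
  have Df: "has_continuous_derivative f (\<lambda>z u. iter_dd [u] f z)"
    by (rule smooth_map_has_continuous_derivative[OF f])
  have Dfv: "has_continuous_derivative (iter_dd [v] f) (\<lambda>z u. iter_dd [u, v] f z)"
    using smooth_map_has_continuous_derivative[OF smooth_map_iter_dd[OF f, of "[v]"]]
    by (simp add: iter_dd_append del: iter_dd.simps)
  show "((\<lambda>b. f (x + a *\<^sub>R v + b *\<^sub>R w) - f (x + c *\<^sub>R v + b *\<^sub>R w)) has_vector_derivative
      iter_dd [w] f (x + a *\<^sub>R v) - iter_dd [w] f (x + c *\<^sub>R v)) (at 0)"
    using has_vector_derivative_diff[OF has_continuous_derivative_along_line[OF Df, of "x + a *\<^sub>R v" w 0]
        has_continuous_derivative_along_line[OF Df, of "x + c *\<^sub>R v" w 0]]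
    by simp
  have "f (x + a *\<^sub>R v + b *\<^sub>R w) - f (x + c *\<^sub>R v + b *\<^sub>R w) =
      integral {c..a} (\<lambda>\<tau>. iter_dd [v] f (x + \<tau> *\<^sub>R v + b *\<^sub>R w))" for b
    using integral_derivative_along_line[OF Df \<open>c \<le> a\<close>, where y="x + b *\<^sub>R w" and v=v]
    by (simp add: algebra_simps)
  then show "((\<lambda>b. f (x + a *\<^sub>R v + b *\<^sub>R w) - f (x + c *\<^sub>R v + b *\<^sub>R w)) has_vector_derivative
      integral {c..a} (\<lambda>\<tau>. iter_dd [w, v] f (x + \<tau> *\<^sub>R v))) (at 0)"
    using integral_along_line_has_vector_derivative_shift[OF Dfv, of c a x v w] by simp
qed

text \<open>Clairaut's theorem: differentiate the previous identity in a at 0.\<close>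
lemma iter_dd_swap:
  fixes f :: "'a::euclidean_space \<Rightarrow> 'b::banach"
  assumes f: "smooth_map f"
  shows "iter_dd [v, w] f x = iter_dd [w, v] f x"
proof (rule vector_derivative_unique_at)
  define fw where "fw = iter_dd [w] f"
  have Dfw: "has_continuous_derivative fw (\<lambda>z u. iter_dd [u, w] f z)"
    using smooth_map_has_continuous_derivative[OF smooth_map_iter_dd[OF f, of "[w]"]]
    by (simp add: fw_def iter_dd_append del: iter_dd.simps)
  show "((\<lambda>a. fw (x + a *\<^sub>R v) - fw (x + (-1) *\<^sub>R v)) has_vector_derivative iter_dd [v, w] f x) (at 0)"
    using has_vector_derivative_diff[OF has_continuous_derivative_along_line[OF Dfw, of x v 0]
        has_vector_derivative_const] by simp
  define I where "I a = integral {-1..a} (\<lambda>\<tau>. iter_dd [w, v] f (x + \<tau> *\<^sub>R v))" for a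
  have "continuous_on UNIV (iter_dd [w, v] f)"
    by (rule smooth_map_imp_continuous_on[OF smooth_map_iter_dd[OF f]])
  then have "continuous_on {-1..1} (\<lambda>\<tau>. iter_dd [w, v] f (x + \<tau> *\<^sub>R v))"
    by (rule continuous_on_compose2) (auto intro!: continuous_intros)
  then have "(I has_vector_derivative iter_dd [w, v] f (x + 0 *\<^sub>R v)) (at 0 within {-1..1})"
    unfolding I_def[abs_def] by (rule integral_has_vector_derivative) auto
  then have "(I has_vector_derivative iter_dd [w, v] f x) (at 0)"
    by (simp add: at_within_Icc_at)
  then show "((\<lambda>a. fw (x + a *\<^sub>R v) - fw (x + (-1) *\<^sub>R v)) has_vector_derivative iter_dd [w, v] f x) (at 0)"
  proof (rule has_vector_derivative_transform_within_open[of _ _ _ "{-1<..<1}"])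
    fix a :: real assume "a \<in> {-1<..<1}"
    then show "I a = fw (x + a *\<^sub>R v) - fw (x + (-1) *\<^sub>R v)"
      using iter_dd_diff_along_line[OF f, of "-1" a w x v] by (simp add: I_def fw_def)
  qed auto
qed

lemma frechet_derivative_periodic:
  assumes "H differentiable (at (z + a))" "\<And>x. H (x + a) = H x"
  shows "frechet_derivative H (at (z + a)) = frechet_derivative H (at z)"
proof -
  have "((\<lambda>x. x + a) has_derivative id) (at z)"
    by (auto intro!: derivative_eq_intros simp: id_def)
  from diff_chain_at[OF this, of H] assms(1)
  have "((H \<circ> (\<lambda>x. x + a)) has_derivative frechet_derivative H (at (z + a))) (at z)"
    by (simp add: frechet_derivative_works)
  moreover have "H \<circ> (\<lambda>x. x + a) = H" using assms(2) by (auto simp: o_def)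
  ultimately show ?thesis using frechet_derivative_at by (metis)
qed

lemma iter_dd_periodic:
  assumes "smooth_map f" "\<And>z. f (z + a) = f z"
  shows "iter_dd ws f (z + a) = iter_dd ws f z"
proof (induction ws arbitrary: z)
  case Nil then show ?case using assms by simp
next
  case (Cons w ws)
  have "iter_dd ws f differentiable (at (z + a))"
    by (rule smooth_map_imp_differentiable[OF smooth_map_iter_dd[OF assms(1)]])
  from frechet_derivative_periodic[OF this] Cons show ?case by simp
qed

declare iter_dd.simps(2) [simp del]

section \<open>Integrals of derivatives of periodic functions\<close>

lemma has_integral_translate:
  fixes g :: "'a::euclidean_space \<Rightarrow> 'b::real_normed_vector"
  assumes "(g has_integral k) (cbox a b)"
  shows "((\<lambda>x. g (x + d)) has_integral k) (cbox (a - d) (b - d))"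
proof -
  have "((\<lambda>x. g (1 *\<^sub>R x + d)) has_integral (1 / \<bar>1\<bar> ^ DIM('a)) *\<^sub>R k)
      ((\<lambda>x. (1/1) *\<^sub>R x + - ((1/1) *\<^sub>R d)) ` cbox a b)"
    by (rule has_integral_affinity[OF assms]) simp
  moreover have "(\<lambda>x. (1/1) *\<^sub>R x + - ((1/1) *\<^sub>R d)) ` cbox a b = cbox (a - d) (b - d)"
    using cbox_translation[of "-d" a b] by (simp add: add.commute)
  ultimately show ?thesis by simp
qed

lemma unit_cube_Int_halfspace_le:
  "(c::real) \<le> 1 \<Longrightarrow>
     cbox (0::real^'n) 1 \<inter> {x. x \<bullet> axis i 1 \<le> c} = cbox 0 (\<chi> j. if j = i then c else 1)"
  unfolding set_eq_iff mem_box_cart Int_iff mem_Collect_eq inner_axis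
  by (simp add: axis_def) (smt (verit, best))

lemma unit_cube_Int_halfspace_ge:
  "0 \<le> (c::real) \<Longrightarrow>
     cbox (0::real^'n) 1 \<inter> {x. x \<bullet> axis i 1 \<ge> c} = cbox (\<chi> j. if j = i then c else 0) 1"
  unfolding set_eq_iff mem_box_cart Int_iff mem_Collect_eq inner_axis
  by (simp add: axis_def) (smt (verit, best))

lemma cbox_translate_axis_le:
  "0 \<le> s \<Longrightarrow> s \<le> 1 \<Longrightarrow>
     cbox ((\<chi> j. if j = i then s else 0) - s *\<^sub>R axis i 1) (1 - s *\<^sub>R axis i 1)
       = cbox (0::real^'n) 1 \<inter> {x. x \<bullet> axis i 1 \<le> 1 - s}"
  unfolding set_eq_iff mem_box_cart Int_iff mem_Collect_eq inner_axis
  by (simp add: axis_def) (smt (verit, best))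

lemma cbox_translate_axis_ge:
  "0 \<le> s \<Longrightarrow> s \<le> 1 \<Longrightarrow>
     cbox (- ((s - 1) *\<^sub>R axis i 1)) ((\<chi> j. if j = i then s else 1) - (s - 1) *\<^sub>R axis i 1)
       = cbox (0::real^'n) 1 \<inter> {x. x \<bullet> axis i 1 \<ge> 1 - s}"
  unfolding set_eq_iff mem_box_cart Int_iff mem_Collect_eq inner_axis
  by (simp add: axis_def) (smt (verit, best))

text \<open>Cut the cube at height s in direction i; translating by s moves the upper slab to the bottom
  and, by periodicity, the lower slab to the top.\<close>
lemma integral_unit_cube_translate_periodic:
  fixes h :: "real^'n \<Rightarrow> 'b::euclidean_space"
  assumes cont: "continuous_on UNIV h" and per: "\<And>x. h (x + axis i 1) = h x"
    and s: "0 \<le> s" "s \<le> 1"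
  shows "integral (cbox 0 1) (\<lambda>x. h (x + s *\<^sub>R axis i 1)) = integral (cbox 0 1) h"
proof -
  define e where "e = (axis i 1 :: real^'n)"
  have hi: "(h has_integral integral (cbox a b) h) (cbox a b)" for a b
    using integrable_continuous[OF continuous_on_subset[OF cont]] by blast
  define Ja where "Ja = integral (cbox 0 1 \<inter> {x. x \<bullet> e \<le> s}) h"
  define Jb where "Jb = integral (cbox 0 1 \<inter> {x. x \<bullet> e \<ge> s}) h"
  have ha: "(h has_integral Ja) (cbox 0 1 \<inter> {x. x \<bullet> e \<le> s})"
    unfolding Ja_def e_def unit_cube_Int_halfspace_le[OF s(2)] by (rule hi)
  have hb: "(h has_integral Jb) (cbox 0 1 \<inter> {x. x \<bullet> e \<ge> s})"
    unfolding Jb_def e_def unit_cube_Int_halfspace_ge[OF s(1)] by (rule hi)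
  have "(h has_integral (Ja + Jb)) (cbox 0 1)"
    by (rule has_integral_split[OF ha hb]) (simp add: e_def)
  then have h_int: "integral (cbox 0 1) h = Ja + Jb" by (rule integral_unique)
  have "((\<lambda>x. h (x + s *\<^sub>R e)) has_integral Jb) (cbox 0 1 \<inter> {x. x \<bullet> e \<le> 1 - s})"
    using has_integral_translate[OF hb[unfolded e_def unit_cube_Int_halfspace_ge[OF s(1)]], of "s *\<^sub>R e"]
    by (simp add: e_def cbox_translate_axis_le[OF s])
  moreover have "((\<lambda>x. h (x + (s - 1) *\<^sub>R e)) has_integral Ja) (cbox 0 1 \<inter> {x. x \<bullet> e \<ge> 1 - s})"
    using has_integral_translate[OF ha[unfolded e_def unit_cube_Int_halfspace_le[OF s(2)]],
        of "(s - 1) *\<^sub>R e"]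
    by (simp add: e_def cbox_translate_axis_ge[OF s])
  moreover have "h (x + (s - 1) *\<^sub>R e) = h (x + s *\<^sub>R e)" for x
    using per[of "x + (s - 1) *\<^sub>R e"] by (simp add: e_def algebra_simps)
  ultimately have "((\<lambda>x. h (x + s *\<^sub>R e)) has_integral (Jb + Ja)) (cbox 0 1)"
    by (intro has_integral_split[where k=e and c="1 - s"]) (simp_all add: e_def)
  then show ?thesis using h_int by (simp add: integral_unique e_def)
qed

lemma integral_translate_has_vector_derivative:
  fixes h :: "'a::euclidean_space \<Rightarrow> real"
  assumes D: "has_continuous_derivative h h'"
  shows "((\<lambda>s. integral (cbox a b) (\<lambda>x. h (x + s *\<^sub>R e))) has_vector_derivative
    integral (cbox a b) (\<lambda>x. h' x e)) (at 0)"
proof -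
  have "((\<lambda>s. integral (cbox a b) (\<lambda>x. h (x + s *\<^sub>R e))) has_field_derivative
      integral (cbox a b) (\<lambda>x. h' (x + 0 *\<^sub>R e) e)) (at 0 within UNIV)"
  proof (rule leibniz_rule_field_derivative[where fx = "\<lambda>s x. h' (x + s *\<^sub>R e) e"])
    fix s x
    show "((\<lambda>s. h (x + s *\<^sub>R e)) has_field_derivative h' (x + s *\<^sub>R e) e) (at s within UNIV)"
      using has_continuous_derivative_along_line[OF D, of x e s]
      by (simp add: has_real_derivative_iff_has_vector_derivative)
  next
    fix s :: real
    show "(\<lambda>x. h (x + s *\<^sub>R e)) integrable_on cbox a b"
      by (rule integrable_on_cbox_continuous_on_UNIV, rule continuous_on_compose2
          [OF has_continuous_derivative_continuous_on[OF D]]) (auto intro!: continuous_intros)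
  next
    show "continuous_on (UNIV \<times> cbox a b) (\<lambda>(s, x). h' (x + s *\<^sub>R e) e)"
      unfolding split_beta
      by (rule continuous_on_compose2[OF has_continuous_derivative_continuous_on_deriv[OF D]])
         (auto intro!: continuous_intros)
  qed auto
  then show ?thesis by (simp add: has_real_derivative_iff_has_vector_derivative)
qed

text \<open>The translates of a periodic function all have the same integral over the cube, so the
  derivative of that integral, computed under the integral sign, vanishes.\<close>
lemma integral_unit_cube_partial_derivative_periodic:
  fixes h :: "real^'n \<Rightarrow> real"
  assumes D: "has_continuous_derivative h h'" and per: "\<And>x. h (x + axis i 1) = h x"
  shows "integral (cbox 0 1) (\<lambda>x. h' x (axis i 1)) = 0"
proof -
  define e where "e = (axis i 1 :: real^'n)"
  define I where "I s = integral (cbox 0 1) (\<lambda>x. h (x + s *\<^sub>R e))" for s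
  have cont: "continuous_on UNIV h" by (rule has_continuous_derivative_continuous_on[OF D])
  have I_unit: "I s = integral (cbox 0 1) h" if "0 \<le> s" "s \<le> 1" for s
    unfolding I_def e_def by (rule integral_unit_cube_translate_periodic[OF cont per that])
  have I_const: "I s = I 0" if "s \<in> {-1<..<1}" for s
  proof (cases "0 \<le> s")
    case True
    with that show ?thesis using I_unit[of s] I_unit[of 0] by simp
  next
    case False
    have "h (x + (s + 1) *\<^sub>R e) = h (x + s *\<^sub>R e)" for x
      using per[of "x + s *\<^sub>R e"] by (simp add: e_def algebra_simps)
    then have "I s = I (s + 1)" by (simp add: I_def)
    also have "\<dots> = I 0" using that False I_unit[of "s + 1"] I_unit[of 0] by simp
    finally show ?thesis .
  qed
  have "(I has_vector_derivative 0) (at 0)"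
  proof (rule has_vector_derivative_transform_within_open[OF has_vector_derivative_const])
    show "I 0 = I s" if "s \<in> {-1<..<1}" for s using I_const[OF that] by (rule sym)
  qed auto
  moreover have "(I has_vector_derivative integral (cbox 0 1) (\<lambda>x. h' x e)) (at 0)"
    unfolding I_def[abs_def] by (rule integral_translate_has_vector_derivative[OF D])
  ultimately have "0 = integral (cbox 0 1) (\<lambda>x. h' x e)" by (rule vector_derivative_unique_at)
  then show ?thesis by (simp add: e_def)
qed

section \<open>Vector calculus on the torus\<close>

lemma has_continuous_derivative_cross3:
  assumes f: "has_continuous_derivative f f'" and g: "has_continuous_derivative g g'"
  shows "has_continuous_derivative (\<lambda>x. cross3 (f x) (g x))
    (\<lambda>x w. cross3 (f' x w) (g x) + cross3 (f x) (g' x w))"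
proof -
  have "bounded_bilinear cross3"
    by (simp add: bilinear_conv_bounded_bilinear[symmetric] bilinear_cross)
  from bounded_bilinear.FDERIV[OF this has_continuous_derivativeD[OF f] has_continuous_derivativeD[OF g]]
  have "((\<lambda>x. cross3 (f x) (g x)) has_derivative
      (\<lambda>w. cross3 (f' z w) (g z) + cross3 (f z) (g' z w))) (at z)"
    for z by (simp add: add.commute)
  moreover have "continuous_on UNIV (\<lambda>z. cross3 (f' z w) (g z) + cross3 (f z) (g' z w))" for w
    by (intro continuous_intros continuous_on_cross has_continuous_derivative_continuous_on[OF f]
        has_continuous_derivative_continuous_on[OF g] has_continuous_derivative_continuous_on_deriv[OF f]
        has_continuous_derivative_continuous_on_deriv[OF g])
  ultimately show ?thesis by (simp add: has_continuous_derivative_def)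
qed

lemma pd_eq_derivative: "(g has_derivative g') (at x) \<Longrightarrow> pd i g x = g' (axis i 1)"
  using has_derivative_along_line[of g g' x 0 "axis i 1"]
  by (simp add: pd_def vector_derivative_at)

lemma pd_component_eq_derivative:
  "(g has_derivative g') (at x) \<Longrightarrow> pd i (\<lambda>y. g y $ k) x = g' (axis i 1) $ k"
  using pd_eq_derivative[OF bounded_linear.has_derivative[OF bounded_linear_vec_nth]] by blast

definition curl_vec :: "(3 \<Rightarrow> real^3) \<Rightarrow> real^3" where
  "curl_vec d = vector [d 2 $ 3 - d 3 $ 2, d 3 $ 1 - d 1 $ 3, d 1 $ 2 - d 2 $ 1]"

lemma curl_eq_curl_vec: "(g has_derivative g') (at x) \<Longrightarrow> curl g x = curl_vec (\<lambda>j. g' (axis j 1))"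
  by (simp add: curl_def curl_vec_def pd_component_eq_derivative)

lemma grad_eq_derivative: "(g has_derivative g') (at x) \<Longrightarrow> grad g x = (\<chi> j. g' (axis j 1))"
  by (simp add: grad_def pd_eq_derivative)

lemma divg_eq_derivative: "(g has_derivative g') (at x) \<Longrightarrow> divg g x = (\<Sum>j\<in>UNIV. g' (axis j 1) $ j)"
  by (simp add: divg_def pd_component_eq_derivative)

lemma adv_eq_derivative:
  "(g has_derivative g') (at x) \<Longrightarrow> adv v g x = (\<Sum>j\<in>UNIV. (v $ j) *\<^sub>R g' (axis j 1))"
  by (simp add: adv_def pd_eq_derivative)

lemma continuous_on_curl_vec [continuous_intros]:
  "(\<And>j. continuous_on S (\<lambda>x. d x j)) \<Longrightarrow> continuous_on S (\<lambda>x. curl_vec (d x))"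
  unfolding curl_vec_def vector3_eq_sum_axis by (intro continuous_intros) auto

lemma sum_cross3_nth_eq_curl_vec:
  "(\<Sum>j\<in>UNIV. (cross3 (b' j) a + cross3 b (a' j)) $ j) = a \<bullet> curl_vec b' - b \<bullet> curl_vec a'"
  by (simp add: sum_3 cross3_def curl_vec_def inner_vec_def algebra_simps)

lemma integral_unit_cube_divergence_periodic:
  fixes V :: "real^'n \<Rightarrow> real^'n"
  assumes D: "has_continuous_derivative V V'" and per: "\<And>x j. V (x + axis j 1) = V x"
  shows "integral (cbox 0 1) (\<lambda>x. \<Sum>j\<in>UNIV. V' x (axis j 1) $ j) = 0"
proof -
  have "integral (cbox 0 1) (\<lambda>x. V' x (axis j 1) $ j) = 0" for j
    using integral_unit_cube_partial_derivative_periodic[OF has_continuous_derivative_vec_nth[OF D]] per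
    by simp
  moreover have "(\<lambda>x. V' x (axis j 1) $ j) integrable_on cbox 0 1" for j
    by (rule integrable_on_cbox_continuous_on_UNIV[OF has_continuous_derivative_continuous_on_deriv
          [OF has_continuous_derivative_vec_nth[OF D]]])
  ultimately show ?thesis by (simp add: integral_sum)
qed

lemma torus_int_diff:
  fixes f g :: "real^3 \<Rightarrow> real"
  shows "continuous_on UNIV f \<Longrightarrow> continuous_on UNIV g \<Longrightarrow>
    torus_int (\<lambda>x. f x - g x) = torus_int f - torus_int g"
  unfolding torus_int_def by (intro integral_diff integrable_on_cbox_continuous_on_UNIV)

lemma torus_int_add:
  fixes f g :: "real^3 \<Rightarrow> real"
  shows "continuous_on UNIV f \<Longrightarrow> continuous_on UNIV g \<Longrightarrow>
    torus_int (\<lambda>x. f x + g x) = torus_int f + torus_int g"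
  unfolding torus_int_def by (intro integral_add integrable_on_cbox_continuous_on_UNIV)

lemma torus_int_sum:
  fixes f :: "'i::finite \<Rightarrow> real^3 \<Rightarrow> real"
  shows "(\<And>j. continuous_on UNIV (f j)) \<Longrightarrow>
    torus_int (\<lambda>x. \<Sum>j\<in>UNIV. f j x) = (\<Sum>j\<in>UNIV. torus_int (f j))"
  unfolding torus_int_def by (intro integral_sum integrable_on_cbox_continuous_on_UNIV) auto

lemma torus_int_mult_right:
  fixes f :: "real^3 \<Rightarrow> real"
  shows "torus_int (\<lambda>x. c * f x) = c * torus_int f"
  by (simp add: torus_int_def)

lemma torus_int_inner_curl_symmetric:
  fixes A B :: "real^3 \<Rightarrow> real^3"
  assumes A: "has_continuous_derivative A A'" and B: "has_continuous_derivative B B'"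
    and per: "periodic3 A" "periodic3 B"
  shows "torus_int (\<lambda>x. A x \<bullet> curl_vec (\<lambda>j. B' x (axis j 1))) =
    torus_int (\<lambda>x. B x \<bullet> curl_vec (\<lambda>j. A' x (axis j 1)))"
proof -
  have "integral (cbox 0 1)
      (\<lambda>x. \<Sum>j\<in>UNIV. (cross3 (B' x (axis j 1)) (A x) + cross3 (B x) (A' x (axis j 1))) $ j) = 0"
    by (rule integral_unit_cube_divergence_periodic[OF has_continuous_derivative_cross3[OF B A]])
       (use per in \<open>simp add: periodic3_def\<close>)
  then have "torus_int (\<lambda>x. A x \<bullet> curl_vec (\<lambda>j. B' x (axis j 1))
      - B x \<bullet> curl_vec (\<lambda>j. A' x (axis j 1))) = 0"
    by (simp only: sum_cross3_nth_eq_curl_vec torus_int_def)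
  moreover have "continuous_on UNIV (\<lambda>x. A x \<bullet> curl_vec (\<lambda>j. B' x (axis j 1)))"
    "continuous_on UNIV (\<lambda>x. B x \<bullet> curl_vec (\<lambda>j. A' x (axis j 1)))"
    by (intro continuous_intros has_continuous_derivative_continuous_on[OF A]
        has_continuous_derivative_continuous_on[OF B] has_continuous_derivative_continuous_on_deriv[OF A]
        has_continuous_derivative_continuous_on_deriv[OF B])+
  ultimately show ?thesis by (simp add: torus_int_diff)
qed

text \<open>(V \<cdot> \<nabla>) g = div (g V) - g div V, and the divergence of a periodic field integrates to zero.\<close>
lemma torus_int_transport_divergence_free:
  fixes g :: "real^3 \<Rightarrow> real" and V :: "real^3 \<Rightarrow> real^3"
  assumes g: "has_continuous_derivative g g'" and V: "has_continuous_derivative V V'"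
    and per: "periodic3 g" "periodic3 V"
    and div_free: "\<And>x. (\<Sum>j\<in>UNIV. V' x (axis j 1) $ j) = 0"
  shows "torus_int (\<lambda>x. \<Sum>j\<in>UNIV. V x $ j * g' x (axis j 1)) = 0"
proof -
  have "(\<Sum>j\<in>UNIV. (g' x (axis j 1) *\<^sub>R V x + g x *\<^sub>R V' x (axis j 1)) $ j) =
      (\<Sum>j\<in>UNIV. V x $ j * g' x (axis j 1))" for x
    using div_free[of x] by (simp add: sum.distrib sum_distrib_left[symmetric] mult.commute)
  moreover have "integral (cbox 0 1)
      (\<lambda>x. \<Sum>j\<in>UNIV. (g' x (axis j 1) *\<^sub>R V x + g x *\<^sub>R V' x (axis j 1)) $ j) = 0"
    by (rule integral_unit_cube_divergence_periodic[OF has_continuous_derivative_scaleR[OF g V]])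
       (use per in \<open>simp add: periodic3_def\<close>)
  ultimately show ?thesis by (simp add: torus_int_def)
qed

section \<open>Two-scale fields\<close>

type_synonym two_scale = "(real^3) \<times> (real^3) \<times> real"

definition dir1 :: "3 \<Rightarrow> two_scale" where "dir1 j = (axis j 1, 0, 0)"
definition dir2 :: "3 \<Rightarrow> two_scale" where "dir2 j = (0, axis j 1, 0)"
definition dir_t :: two_scale where "dir_t = (0, 0, 1)"

definition curl2 :: "(two_scale \<Rightarrow> real^3) \<Rightarrow> two_scale \<Rightarrow> real^3" where
  "curl2 H z = curl_vec (\<lambda>j. iter_dd [dir2 j] H z)"

lemma has_continuous_derivative_slice2:
  "has_continuous_derivative (H :: two_scale \<Rightarrow> 'b::real_normed_vector) H' \<Longrightarrow>
    has_continuous_derivative (\<lambda>y. H (x1, y, t)) (\<lambda>y v. H' (x1, y, t) (0, v, 0))"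
  using has_continuous_derivative_compose_affine[of H H' "\<lambda>y. (0, y, 0)" "(x1, 0, t)"]
  by (simp add: bounded_linear_Pair bounded_linear_ident)

lemma has_continuous_derivative_slice1:
  "has_continuous_derivative (H :: two_scale \<Rightarrow> 'b::real_normed_vector) H' \<Longrightarrow>
    has_continuous_derivative (\<lambda>y. H (y, x2, t)) (\<lambda>y v. H' (y, x2, t) (v, 0, 0))"
  using has_continuous_derivative_compose_affine[of H H' "\<lambda>y. (y, 0, 0)" "(0, x2, t)"]
  by (simp add: bounded_linear_Pair bounded_linear_ident)

lemma has_continuous_derivative_slice_space:
  "has_continuous_derivative (H :: (real^3) \<times> real \<Rightarrow> 'b::real_normed_vector) H' \<Longrightarrow>
    has_continuous_derivative (\<lambda>y. H (y, t)) (\<lambda>y v. H' (y, t) (v, 0))"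
  using has_continuous_derivative_compose_affine[of H H' "\<lambda>y. (y, 0)" "(0, t)"]
  by (simp add: bounded_linear_Pair bounded_linear_ident)

lemma continuous_on_slice2:
  "continuous_on UNIV (H :: two_scale \<Rightarrow> 'b::topological_space) \<Longrightarrow> continuous_on UNIV (\<lambda>y. H (x1, y, t))"
  by (rule continuous_on_compose2[of UNIV H]) (auto intro!: continuous_intros)

lemma continuous_on_fixed_time:
  "continuous_on UNIV (H :: two_scale \<Rightarrow> 'b::topological_space) \<Longrightarrow> continuous_on S (\<lambda>p. H (fst p, snd p, t))"
  by (rule continuous_on_compose2[of UNIV H]) (auto intro!: continuous_intros)

lemma smooth_map_continuous_on_iter_dd:
  "smooth_map H \<Longrightarrow> continuous_on UNIV (iter_dd ws H)"
  by (rule smooth_map_imp_continuous_on[OF smooth_map_iter_dd])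

lemma curl_slice2: "smooth_map H \<Longrightarrow> curl (\<lambda>y. H (x1, y, t)) x2 = curl2 H (x1, x2, t)"
  using curl_eq_curl_vec[OF has_continuous_derivativeD
      [OF has_continuous_derivative_slice2[OF smooth_map_has_continuous_derivative]]]
  by (simp add: curl2_def dir2_def)

lemma grad_slice2:
  "smooth_map (P :: two_scale \<Rightarrow> real) \<Longrightarrow> grad (\<lambda>y. P (x1, y, t)) x2 = (\<chi> j. iter_dd [dir2 j] P (x1, x2, t))"
  using grad_eq_derivative[OF has_continuous_derivativeD
      [OF has_continuous_derivative_slice2[OF smooth_map_has_continuous_derivative]]]
  by (simp add: dir2_def)

lemma adv_slice1:
  "smooth_map H \<Longrightarrow> adv v (\<lambda>y. H (y, x2, t)) x1 = (\<Sum>j\<in>UNIV. (v $ j) *\<^sub>R iter_dd [dir1 j] H (x1, x2, t))"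
  using adv_eq_derivative[OF has_continuous_derivativeD
      [OF has_continuous_derivative_slice1[OF smooth_map_has_continuous_derivative]]]
  by (simp add: dir1_def)

lemma dt_slice: "smooth_map H \<Longrightarrow> dt (\<lambda>s. H (x1, x2, s)) t = iter_dd [dir_t] H (x1, x2, t)"
  using has_continuous_derivative_along_line[OF smooth_map_has_continuous_derivative,
      of H "(x1, x2, 0)" dir_t t]
  by (simp add: dt_def dir_t_def vector_derivative_at)

lemma divg_slice_space:
  "smooth_map (U :: (real^3) \<times> real \<Rightarrow> real^3) \<Longrightarrow>
    divg (\<lambda>y. U (y, t)) x = (\<Sum>j\<in>UNIV. iter_dd [(axis j 1, 0)] U (x, t) $ j)"
  using divg_eq_derivative[OF has_continuous_derivativeD
      [OF has_continuous_derivative_slice_space[OF smooth_map_has_continuous_derivative]]]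
  by simp

lemma has_continuous_derivative_curl2:
  assumes H: "smooth_map H"
  shows "has_continuous_derivative (curl2 H) (\<lambda>z w. curl2 (iter_dd [w] H) z)"
proof -
  have D: "has_continuous_derivative (iter_dd [dir2 j] H) (\<lambda>z w. iter_dd [w] (iter_dd [dir2 j] H) z)" for j
    by (rule smooth_map_has_continuous_derivative[OF smooth_map_iter_dd[OF H]])
  have "has_continuous_derivative (curl2 H) (\<lambda>z w. curl_vec (\<lambda>j. iter_dd [w] (iter_dd [dir2 j] H) z))"
    unfolding curl2_def[abs_def] curl_vec_def
    by (intro has_continuous_derivative_vector3 has_continuous_derivative_diff
        has_continuous_derivative_vec_nth D)
  moreover have "iter_dd [w] (iter_dd [dir2 j] H) z = iter_dd [dir2 j] (iter_dd [w] H) z" for w j z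
    using iter_dd_swap[OF H] by (simp add: iter_dd_append)
  ultimately show ?thesis by (simp add: curl2_def)
qed

lemma continuous_on_curl2: "smooth_map H \<Longrightarrow> continuous_on UNIV (curl2 H)"
  by (rule has_continuous_derivative_continuous_on[OF has_continuous_derivative_curl2])

lemma sum_curl2_iter_dd_eq_0:
  "smooth_map (H :: two_scale \<Rightarrow> real^3) \<Longrightarrow> (\<Sum>j\<in>UNIV. curl2 (iter_dd [dir2 j] H) z $ j) = 0"
  using iter_dd_swap[of H "dir2 1" "dir2 2" z] iter_dd_swap[of H "dir2 1" "dir2 3" z]
    iter_dd_swap[of H "dir2 2" "dir2 3" z]
  by (simp add: sum_3 curl2_def curl_vec_def iter_dd_append)

lemma periodic3_slice2_iter_dd:
  fixes H :: "two_scale \<Rightarrow> 'b::real_normed_vector"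
  assumes H: "smooth_map H" and per: "\<And>x1 t. periodic3 (\<lambda>x2. H (x1, x2, t))"
  shows "periodic3 (\<lambda>x2. iter_dd ws H (x1, x2, t))"
proof -
  have "H (z + dir2 i) = H z" for z i
    using per by (cases z) (simp add: periodic3_def dir2_def)
  then have "iter_dd ws H ((x1, x2, t) + dir2 i) = iter_dd ws H (x1, x2, t)" for x2 i
    by (rule iter_dd_periodic[OF H])
  then show ?thesis by (simp add: periodic3_def dir2_def)
qed

lemma periodic3_slice1_iter_dd:
  fixes H :: "two_scale \<Rightarrow> 'b::real_normed_vector"
  assumes H: "smooth_map H" and per: "\<And>x2 t. periodic3 (\<lambda>x1. H (x1, x2, t))"
  shows "periodic3 (\<lambda>x1. iter_dd ws H (x1, x2, t))"
proof -
  have "H (z + dir1 i) = H z" for z i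
    using per by (cases z) (simp add: periodic3_def dir1_def)
  then have "iter_dd ws H ((x1, x2, t) + dir1 i) = iter_dd ws H (x1, x2, t)" for x1 i
    by (rule iter_dd_periodic[OF H])
  then show ?thesis by (simp add: periodic3_def dir1_def)
qed

lemma periodic3_slice2_curl2:
  "smooth_map H \<Longrightarrow> (\<And>x1 t. periodic3 (\<lambda>x2. H (x1, x2, t))) \<Longrightarrow> periodic3 (\<lambda>x2. curl2 H (x1, x2, t))"
  using periodic3_slice2_iter_dd[of H] by (simp add: periodic3_def curl2_def)

lemma periodic3_slice1_curl2:
  "smooth_map H \<Longrightarrow> (\<And>x2 t. periodic3 (\<lambda>x1. H (x1, x2, t))) \<Longrightarrow> periodic3 (\<lambda>x1. curl2 H (x1, x2, t))"
  using periodic3_slice1_iter_dd[of H] by (simp add: periodic3_def curl2_def)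

lemma torus_int_curl2_symmetric:
  assumes H: "smooth_map H" and K: "smooth_map K"
    and per: "\<And>x1 t. periodic3 (\<lambda>x2. H (x1, x2, t))" "\<And>x1 t. periodic3 (\<lambda>x2. K (x1, x2, t))"
  shows "torus_int (\<lambda>x2. H (x1, x2, t) \<bullet> curl2 K (x1, x2, t)) =
    torus_int (\<lambda>x2. K (x1, x2, t) \<bullet> curl2 H (x1, x2, t))"
  using torus_int_inner_curl_symmetric[OF
      has_continuous_derivative_slice2[OF smooth_map_has_continuous_derivative[OF H]]
      has_continuous_derivative_slice2[OF smooth_map_has_continuous_derivative[OF K]] per]
  by (simp add: curl2_def dir2_def)

lemma torus_int_grad2_inner_curl2_eq_0:
  fixes P :: "two_scale \<Rightarrow> real"
  assumes P: "smooth_map P" and F: "smooth_map F"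
    and per: "\<And>x1 t. periodic3 (\<lambda>x2. P (x1, x2, t))" "\<And>x1 t. periodic3 (\<lambda>x2. F (x1, x2, t))"
  shows "torus_int (\<lambda>x2. (\<chi> j. iter_dd [dir2 j] P (x1, x2, t)) \<bullet> curl2 F (x1, x2, t)) = 0"
proof -
  have "torus_int (\<lambda>y. \<Sum>j\<in>UNIV. curl2 F (x1, y, t) $ j * iter_dd [(0, axis j 1, 0)] P (x1, y, t)) = 0"
  proof (rule torus_int_transport_divergence_free)
    show "has_continuous_derivative (\<lambda>y. P (x1, y, t)) (\<lambda>y v. iter_dd [(0, v, 0)] P (x1, y, t))"
      by (rule has_continuous_derivative_slice2[OF smooth_map_has_continuous_derivative[OF P]])
    show "has_continuous_derivative (\<lambda>y. curl2 F (x1, y, t))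
        (\<lambda>y v. curl2 (iter_dd [(0, v, 0)] F) (x1, y, t))"
      by (rule has_continuous_derivative_slice2[OF has_continuous_derivative_curl2[OF F]])
    show "(\<Sum>j\<in>UNIV. curl2 (iter_dd [(0, axis j 1, 0)] F) (x1, y, t) $ j) = 0" for y
      using sum_curl2_iter_dd_eq_0[OF F] by (simp add: dir2_def)
  qed (use per periodic3_slice2_curl2[OF F] in auto)
  then show ?thesis by (simp add: inner_vec_def dir2_def mult.commute)
qed

lemma torus_int_torus_int_eq_integral:
  fixes f :: "(real^3) \<times> (real^3) \<Rightarrow> real"
  assumes "continuous_on UNIV f"
  shows "torus_int (\<lambda>x1. torus_int (\<lambda>x2. f (x1, x2))) = integral (cbox (0, 0) (1, 1)) f"
  unfolding torus_int_def
  by (rule integral_prod_continuous[symmetric]) (rule continuous_on_subset[OF assms], simp)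

lemma torus_int_swap:
  fixes f :: "real^3 \<Rightarrow> real^3 \<Rightarrow> real"
  assumes "continuous_on UNIV (\<lambda>(x1, x2). f x1 x2)"
  shows "torus_int (\<lambda>x1. torus_int (\<lambda>x2. f x1 x2)) = torus_int (\<lambda>x2. torus_int (\<lambda>x1. f x1 x2))"
  unfolding torus_int_def
  by (rule integral_swap_continuous) (rule continuous_on_subset[OF assms], simp)

lemma torus_int_torus_int_has_real_derivative:
  fixes G :: "two_scale \<Rightarrow> real"
  assumes G: "has_continuous_derivative G G'"
  shows "((\<lambda>s. torus_int (\<lambda>x1. torus_int (\<lambda>x2. G (x1, x2, s)))) has_real_derivative
      torus_int (\<lambda>x1. torus_int (\<lambda>x2. G' (x1, x2, t) dir_t))) (at t)"
proof -
  note cG = has_continuous_derivative_continuous_on[OF G]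
  note cG' = has_continuous_derivative_continuous_on_deriv[OF G]
  have "((\<lambda>s. integral (cbox (0, 0) (1, 1)) (\<lambda>p. G (fst p, snd p, s))) has_field_derivative
      integral (cbox (0, 0) (1, 1)) (\<lambda>p. G' (fst p, snd p, t) dir_t)) (at t within UNIV)"
  proof (rule leibniz_rule_field_derivative[where fx="\<lambda>s p. G' (fst p, snd p, s) dir_t"])
    fix s :: real and p :: "(real^3) \<times> (real^3)"
    show "((\<lambda>s. G (fst p, snd p, s)) has_field_derivative G' (fst p, snd p, s) dir_t) (at s within UNIV)"
      using has_continuous_derivative_along_line[OF G, of "(fst p, snd p, 0)" dir_t s]
      by (simp add: dir_t_def has_real_derivative_iff_has_vector_derivative)
  next
    show "(\<lambda>p. G (fst p, snd p, s)) integrable_on cbox (0, 0) (1, 1)" for s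
      by (rule integrable_on_cbox_continuous_on_UNIV[OF continuous_on_fixed_time[OF cG]])
  next
    show "continuous_on (UNIV \<times> cbox (0, 0) (1, 1)) (\<lambda>(s, p). G' (fst p, snd p, s) dir_t)"
      unfolding split_beta by (rule continuous_on_compose2[OF cG']) (auto intro!: continuous_intros)
  qed auto
  then show ?thesis
    using torus_int_torus_int_eq_integral[OF continuous_on_fixed_time[OF cG]]
      torus_int_torus_int_eq_integral[OF continuous_on_fixed_time[OF cG']]
    by simp
qed

section \<open>Helicity balance\<close>

definition helicity_density :: "(two_scale \<Rightarrow> real^3) \<Rightarrow> two_scale \<Rightarrow> real" where
  "helicity_density F z = F z \<bullet> curl2 F z"

lemma iter_dd_helicity_density:
  assumes F: "smooth_map F"
  shows "iter_dd [w] (helicity_density F) z =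
    iter_dd [w] F z \<bullet> curl2 F z + F z \<bullet> curl2 (iter_dd [w] F) z"
proof -
  have "has_continuous_derivative (helicity_density F)
      (\<lambda>z w. iter_dd [w] F z \<bullet> curl2 F z + F z \<bullet> curl2 (iter_dd [w] F) z)"
    unfolding helicity_density_def[abs_def]
    by (rule has_continuous_derivative_inner[OF smooth_map_has_continuous_derivative[OF F]
          has_continuous_derivative_curl2[OF F]])
  from frechet_derivative_at[OF has_continuous_derivativeD[OF this]]
  have "(\<lambda>w. iter_dd [w] F z \<bullet> curl2 F z + F z \<bullet> curl2 (iter_dd [w] F) z) =
      frechet_derivative (helicity_density F) (at z)" .
  from fun_cong[OF this, of w] show ?thesis by (simp add: iter_dd.simps)
qed

lemma has_continuous_derivative_helicity_density:
  assumes F: "smooth_map F"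
  shows "has_continuous_derivative (helicity_density F) (\<lambda>z w. iter_dd [w] (helicity_density F) z)"
  unfolding iter_dd_helicity_density[OF F]
  unfolding helicity_density_def[abs_def]
  by (rule has_continuous_derivative_inner[OF smooth_map_has_continuous_derivative[OF F]
        has_continuous_derivative_curl2[OF F]])

lemma periodic3_slice1_helicity_density:
  "smooth_map F \<Longrightarrow> (\<And>x2 t. periodic3 (\<lambda>x1. F (x1, x2, t))) \<Longrightarrow>
    periodic3 (\<lambda>x1. helicity_density F (x1, x2, t))"
  using periodic3_slice1_curl2[of F] by (simp add: periodic3_def helicity_density_def)

lemma torus_int_derivative_helicity_density:
  assumes F: "smooth_map F" and per: "\<And>x1 t. periodic3 (\<lambda>x2. F (x1, x2, t))"
  shows "torus_int (\<lambda>x2. iter_dd [w] (helicity_density F) (x1, x2, t))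
    = 2 * torus_int (\<lambda>x2. iter_dd [w] F (x1, x2, t) \<bullet> curl2 F (x1, x2, t))"
proof -
  have Fw: "smooth_map (iter_dd [w] F)" by (rule smooth_map_iter_dd[OF F])
  have "torus_int (\<lambda>x2. F (x1, x2, t) \<bullet> curl2 (iter_dd [w] F) (x1, x2, t)) =
      torus_int (\<lambda>x2. iter_dd [w] F (x1, x2, t) \<bullet> curl2 F (x1, x2, t))"
    by (rule torus_int_curl2_symmetric[OF F Fw per periodic3_slice2_iter_dd[OF F per]])
  moreover have "continuous_on UNIV (\<lambda>x2. iter_dd [w] F (x1, x2, t) \<bullet> curl2 F (x1, x2, t))"
    "continuous_on UNIV (\<lambda>x2. F (x1, x2, t) \<bullet> curl2 (iter_dd [w] F) (x1, x2, t))"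
    by (intro continuous_on_slice2[of "\<lambda>z. _ z \<bullet> _ z"] continuous_intros continuous_on_curl2
        smooth_map_imp_continuous_on F Fw)+
  ultimately show ?thesis by (simp add: iter_dd_helicity_density[OF F] torus_int_add)
qed

lemma helicity_has_real_derivative:
  assumes F: "smooth_map F" and per: "\<And>x1 t. periodic3 (\<lambda>x2. F (x1, x2, t))"
  shows "((\<lambda>s. torus_int (\<lambda>x1. torus_int (\<lambda>x2. helicity_density F (x1, x2, s)))) has_real_derivative
      2 * torus_int (\<lambda>x1. torus_int (\<lambda>x2. iter_dd [dir_t] F (x1, x2, t) \<bullet> curl2 F (x1, x2, t)))) (at t)"
  using torus_int_torus_int_has_real_derivative[OF has_continuous_derivative_helicity_density[OF F], of t]
  by (simp add: torus_int_derivative_helicity_density[OF F per] torus_int_mult_right)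

lemma torus_int_helicity_production_slice2:
  fixes F :: "two_scale \<Rightarrow> real^3" and P :: "two_scale \<Rightarrow> real"
    and u :: "real^3" and W :: "real^3 \<Rightarrow> real^3"
  assumes F: "smooth_map F" and P: "smooth_map P"
    and perF: "\<And>x1 t. periodic3 (\<lambda>x2. F (x1, x2, t))" and perP: "\<And>x1 t. periodic3 (\<lambda>x2. P (x1, x2, t))"
    and eq: "\<And>x2. iter_dd [dir_t] F (x1, x2, t) =
        - (\<Sum>j\<in>UNIV. u $ j *\<^sub>R iter_dd [dir1 j] F (x1, x2, t))
        + cross3 (W x2) (curl2 F (x1, x2, t)) - (\<chi> j. iter_dd [dir2 j] P (x1, x2, t))"
  shows "2 * torus_int (\<lambda>x2. iter_dd [dir_t] F (x1, x2, t) \<bullet> curl2 F (x1, x2, t)) =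
    - (\<Sum>j\<in>UNIV. u $ j * torus_int (\<lambda>x2. iter_dd [dir1 j] (helicity_density F) (x1, x2, t)))"
proof -
  define K where "K j x2 = iter_dd [dir1 j] F (x1, x2, t) \<bullet> curl2 F (x1, x2, t)" for j x2
  define Q where "Q x2 = (\<chi> j. iter_dd [dir2 j] P (x1, x2, t)) \<bullet> curl2 F (x1, x2, t)" for x2
  have cK: "continuous_on UNIV (\<lambda>x2. u $ j * K j x2)" for j
    unfolding K_def
    by (intro continuous_on_slice2[of "\<lambda>z. u $ j * (iter_dd _ F z \<bullet> curl2 F z)"] continuous_intros
        continuous_on_curl2 smooth_map_continuous_on_iter_dd F)
  have cQ: "continuous_on UNIV Q"
    unfolding Q_def
    by (intro continuous_on_slice2[of "\<lambda>z. (\<chi> j. iter_dd [dir2 j] P z) \<bullet> curl2 F z"] continuous_intros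
        continuous_on_curl2 smooth_map_continuous_on_iter_dd F P)
  have "iter_dd [dir_t] F (x1, x2, t) \<bullet> curl2 F (x1, x2, t) = - (\<Sum>j\<in>UNIV. u $ j * K j x2) - Q x2" for x2
    unfolding eq K_def Q_def
    by (simp add: inner_diff_left inner_add_left inner_sum_left dot_cross_self)
  then have "torus_int (\<lambda>x2. iter_dd [dir_t] F (x1, x2, t) \<bullet> curl2 F (x1, x2, t)) =
      torus_int (\<lambda>x2. - (\<Sum>j\<in>UNIV. u $ j * K j x2) - Q x2)"
    by presburger
  also have "\<dots> = torus_int (\<lambda>x2. - (\<Sum>j\<in>UNIV. u $ j * K j x2)) - torus_int Q"
    by (rule torus_int_diff) (intro continuous_intros cK cQ)+
  also have "\<dots> = - (\<Sum>j\<in>UNIV. torus_int (\<lambda>x2. u $ j * K j x2)) - torus_int Q"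
    using torus_int_sum[OF cK] by (simp add: torus_int_def)
  also have "\<dots> = - (\<Sum>j\<in>UNIV. u $ j * torus_int (K j)) - torus_int Q"
    by (simp only: torus_int_mult_right)
  finally have "torus_int (\<lambda>x2. iter_dd [dir_t] F (x1, x2, t) \<bullet> curl2 F (x1, x2, t)) =
      - (\<Sum>j\<in>UNIV. u $ j * torus_int (K j)) - torus_int Q" .
  moreover have "torus_int Q = 0"
    unfolding Q_def by (rule torus_int_grad2_inner_curl2_eq_0[OF P F perP perF])
  moreover have "torus_int (\<lambda>x2. iter_dd [dir1 j] (helicity_density F) (x1, x2, t)) =
      2 * torus_int (K j)" for j
    unfolding K_def by (rule torus_int_derivative_helicity_density[OF F perF])
  ultimately show ?thesis by (simp add: sum_distrib_left mult.left_commute)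
qed

lemma torus_int_helicity_production_eq_0:
  fixes F :: "two_scale \<Rightarrow> real^3" and P :: "two_scale \<Rightarrow> real"
    and U :: "(real^3) \<times> real \<Rightarrow> real^3" and W :: "real^3 \<Rightarrow> real^3 \<Rightarrow> real^3"
  assumes F: "smooth_map F" and P: "smooth_map P" and U: "smooth_map U"
    and perF1: "\<And>x2 t. periodic3 (\<lambda>x1. F (x1, x2, t))" and perF2: "\<And>x1 t. periodic3 (\<lambda>x2. F (x1, x2, t))"
    and perP: "\<And>x1 t. periodic3 (\<lambda>x2. P (x1, x2, t))" and perU: "periodic3 (\<lambda>x1. U (x1, t))"
    and div_free: "\<And>x1. (\<Sum>j\<in>UNIV. iter_dd [(axis j 1, 0)] U (x1, t) $ j) = 0"
    and eq: "\<And>x1 x2. iter_dd [dir_t] F (x1, x2, t) =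
        - (\<Sum>j\<in>UNIV. U (x1, t) $ j *\<^sub>R iter_dd [dir1 j] F (x1, x2, t))
        + cross3 (W x1 x2) (curl2 F (x1, x2, t)) - (\<chi> j. iter_dd [dir2 j] P (x1, x2, t))"
  shows "torus_int (\<lambda>x1. torus_int (\<lambda>x2. iter_dd [dir_t] F (x1, x2, t) \<bullet> curl2 F (x1, x2, t))) = 0"
proof -
  define R where "R x1 x2 = (\<Sum>j\<in>UNIV. U (x1, t) $ j * iter_dd [dir1 j] (helicity_density F) (x1, x2, t))"
    for x1 x2
  note DH = has_continuous_derivative_helicity_density[OF F]
  have cR: "continuous_on UNIV (\<lambda>(x1, x2). R x1 x2)"
    unfolding R_def split_beta
    by (intro continuous_intros continuous_on_compose2[OF smooth_map_imp_continuous_on[OF U]]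
        continuous_on_compose2[OF has_continuous_derivative_continuous_on_deriv[OF DH]]) auto
  have "2 * torus_int (\<lambda>x2. iter_dd [dir_t] F (x1, x2, t) \<bullet> curl2 F (x1, x2, t)) =
      - torus_int (\<lambda>x2. R x1 x2)" for x1
  proof -
    have "continuous_on UNIV (\<lambda>x2. U (x1, t) $ j * iter_dd [dir1 j] (helicity_density F) (x1, x2, t))" for j
      by (intro continuous_intros
          continuous_on_slice2[OF has_continuous_derivative_continuous_on_deriv[OF DH]])
    then have "torus_int (\<lambda>x2. R x1 x2) =
        (\<Sum>j\<in>UNIV. U (x1, t) $ j * torus_int (\<lambda>x2. iter_dd [dir1 j] (helicity_density F) (x1, x2, t)))"
      unfolding R_def by (simp only: torus_int_sum torus_int_mult_right)
    then show ?thesis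
      using torus_int_helicity_production_slice2[OF F P perF2 perP eq] by simp
  qed
  then have "2 * torus_int (\<lambda>x1. torus_int (\<lambda>x2. iter_dd [dir_t] F (x1, x2, t) \<bullet> curl2 F (x1, x2, t))) =
      - torus_int (\<lambda>x1. torus_int (\<lambda>x2. R x1 x2))"
    by (simp add: torus_int_def flip: integral_mult_right integral_neg)
  also have "\<dots> = - torus_int (\<lambda>x2. torus_int (\<lambda>x1. R x1 x2))"
    by (simp only: torus_int_swap[OF cR])
  also have "\<dots> = 0"
  proof -
    have "torus_int (\<lambda>x1. R x1 x2) = 0" for x2
      unfolding R_def dir1_def
      by (rule torus_int_transport_divergence_free
          [OF has_continuous_derivative_slice1[OF DH] has_continuous_derivative_slice_space
            [OF smooth_map_has_continuous_derivative[OF U]]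
            periodic3_slice1_helicity_density[OF F perF1] perU div_free])
    then show ?thesis by (simp add: torus_int_def)
  qed
  finally show ?thesis by simp
qed

theorem mainTheorem2:
  fixes u1 m1 :: "real^3 \<Rightarrow> real \<Rightarrow> real^3"
    and u2 m2 :: "real^3 \<Rightarrow> real^3 \<Rightarrow> real \<Rightarrow> real^3"
    and p1 :: "real^3 \<Rightarrow> real \<Rightarrow> real"
    and p2 :: "real^3 \<Rightarrow> real^3 \<Rightarrow> real \<Rightarrow> real"
  assumes sm_u1: "smooth_map (\<lambda>(x1, t). u1 x1 t)"
    and sm_m1: "smooth_map (\<lambda>(x1, t). m1 x1 t)"
    and sm_p1: "smooth_map (\<lambda>(x1, t). p1 x1 t)"
    and sm_u2: "smooth_map (\<lambda>(x1, x2, t). u2 x1 x2 t)"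
    and sm_m2: "smooth_map (\<lambda>(x1, x2, t). m2 x1 x2 t)"
    and sm_p2: "smooth_map (\<lambda>(x1, x2, t). p2 x1 x2 t)"
    and per_u1: "\<forall>t. periodic3 (\<lambda>x1. u1 x1 t)"
    and per_m1: "\<forall>t. periodic3 (\<lambda>x1. m1 x1 t)"
    and per_p1: "\<forall>t. periodic3 (\<lambda>x1. p1 x1 t)"
    and per_u2: "\<forall>x2 t. periodic3 (\<lambda>x1. u2 x1 x2 t)" "\<forall>x1 t. periodic3 (\<lambda>x2. u2 x1 x2 t)"
    and per_m2: "\<forall>x2 t. periodic3 (\<lambda>x1. m2 x1 x2 t)" "\<forall>x1 t. periodic3 (\<lambda>x2. m2 x1 x2 t)"
    and per_p2: "\<forall>x2 t. periodic3 (\<lambda>x1. p2 x1 x2 t)" "\<forall>x1 t. periodic3 (\<lambda>x2. p2 x1 x2 t)"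
    and div_u1: "\<forall>x1 t. divg (\<lambda>y. u1 y t) x1 = 0"
    and div_u2: "\<forall>x1 x2 t. divg (\<lambda>y. u2 x1 y t) x2 = 0"
    and eq1: "\<forall>x1 t. dt (m1 x1) t + adv (u1 x1 t) (\<lambda>y. m1 y t) x1
                 + gradT (\<lambda>y. u1 y t) (m1 x1 t) x1
                 + torus_int (\<lambda>x2. gradT (\<lambda>y. u2 y x2 t) (m2 x1 x2 t) x1)
               = - grad (\<lambda>y. p1 y t) x1"
    and eq2: "\<forall>x1 x2 t. dt (m2 x1 x2) t + adv (u1 x1 t) (\<lambda>y. m2 y x2 t) x1
                 - cross3 (u2 x1 x2 t) (curl (\<lambda>y. m2 x1 y t) x2)
               = - grad (\<lambda>y. p2 x1 y t) x2"
  shows "((\<lambda>t. torus_int (\<lambda>x1. torus_int (\<lambda>x2. m2 x1 x2 t \<bullet> curl (\<lambda>y. m2 x1 y t) x2)))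
            has_real_derivative 0) (at t)"
proof -
  define F where "F = (\<lambda>(x1, x2, t). m2 x1 x2 t)"
  define P where "P = (\<lambda>(x1, x2, t). p2 x1 x2 t)"
  define U where "U = (\<lambda>(x1, t). u1 x1 t)"
  have slice_eq: "m2 x1 x2 = (\<lambda>s. F (x1, x2, s))" "p2 x1 x2 = (\<lambda>s. P (x1, x2, s))" "u1 x1 = (\<lambda>s. U (x1, s))"
    for x1 x2 by (simp_all add: F_def P_def U_def)
  have F: "smooth_map F" and P: "smooth_map P" and U: "smooth_map U"
    using sm_m2 sm_p2 sm_u1 by (simp_all add: F_def P_def U_def)
  have div_free: "(\<Sum>j\<in>UNIV. iter_dd [(axis j 1, 0)] U (x1, t) $ j) = 0" for x1
    using div_u1 by (simp add: slice_eq divg_slice_space[OF U])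
  have "iter_dd [dir_t] F (x1, x2, t) =
      - (\<Sum>j\<in>UNIV. U (x1, t) $ j *\<^sub>R iter_dd [dir1 j] F (x1, x2, t))
      + cross3 (u2 x1 x2 t) (curl2 F (x1, x2, t)) - (\<chi> j. iter_dd [dir2 j] P (x1, x2, t))" for x1 x2
    using eq2[rule_format, of x1 x2 t]
    by (simp add: slice_eq dt_slice[OF F] adv_slice1[OF F] curl_slice2[OF F] grad_slice2[OF P] algebra_simps)
  from torus_int_helicity_production_eq_0[OF F P U _ _ _ _ div_free this]
  have "torus_int (\<lambda>x1. torus_int (\<lambda>x2. iter_dd [dir_t] F (x1, x2, t) \<bullet> curl2 F (x1, x2, t))) = 0"
    using per_m2 per_p2 per_u1 by (simp add: slice_eq)
  with helicity_has_real_derivative[of F t] F per_m2(2) show ?thesis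
    by (simp add: slice_eq helicity_density_def curl_slice2[OF F])
qed

end
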